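(* Let $\xi$ be a positive random variable such that for some $c>0$, $-\log P(\xi>t)\sim ct$ as $t\to\infty$, and let $\xi_1,\xi_2$ be independent copies of $\xi$. Then $$-\log E\Big[\exp\big(-\lambda/(\xi_1+\xi_2)^2\big)\Big]\sim 3\,(c/2)^{2/3}\lambda^{1/3}\quad\text{as }\lambda\to\infty.$$
   Context: $f\sim g$ means $f/g\to1$. *)

theory Defs
  imports "HOL-Probability.Probability" "HOL-Library.Landau_Symbols"
begin

end

theory Submission
  imports Defs "HOL-Real_Asymp.Real_Asymp"
begin

(* Put S = X1 + X2. Its tail has the same exponential rate c as that of X1: P(S > t) >= P(X1 > t)
   because X2 > 0, and by Chernoff P(S > t) <= exp(-a t) E exp(a X1) E exp(a X2) for every a < c,
   these exponential moments being finite.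
   For a positive S with -ln P(S > t) ~ c t, the function s |-> l/s^2 + a s is minimal at
   s = (2l/a)^(1/3), with minimum 3 (a/2)^(2/3) l^(1/3). For a > c, restricting the expectation
   to {S > s} at this s gives -ln E exp(-l/S^2) <= 3 (a/2)^(2/3) l^(1/3) eventually; for a < c,
   the inequality l/S^2 + a S >= 3 (a/2)^(2/3) l^(1/3) inside the expectation gives
   -ln E exp(-l/S^2) >= 3 (a/2)^(2/3) l^(1/3) - ln E exp(a S). Letting a tend to c yields the
   asymptotics. *)

lemma powr_one_third_cube: "0 \<le> x \<Longrightarrow> (x powr (1/3)) ^ 3 = (x::real)"
  by (cases "x = 0") (simp_all add: powr_realpow[symmetric] powr_powr)

lemma inverse_square_plus_linear_ge:
  fixes c s l :: real
  assumes "0 < c" "0 < s" "0 \<le> l"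
  shows "3 * (c/2) powr (2/3) * l powr (1/3) \<le> l / s^2 + c * s"
proof -
  define a u where "a = (c/2) powr (1/3)" and "u = l powr (1/3)"
  have "0 < a" "0 \<le> u" using assms by (simp_all add: a_def u_def)
  have a2: "(c/2) powr (2/3) = a^2"
    using assms by (simp add: a_def powr_realpow[symmetric] powr_powr)
  have "c = 2 * a^3" "l = u^3"
    using assms by (simp_all add: a_def u_def powr_one_third_cube)
  have "3 * (c/2) powr (2/3) * l powr (1/3) = 3 * a^2 * u"
    by (simp add: a2 u_def)
  also have "\<dots> \<le> u^3 / s^2 + 2 * a^3 * s"
    \<comment> \<open>AM-GM for the three terms u^3/s^2, a^3 s, a^3 s\<close>
  proof -
    have "0 \<le> (u - a * s)\<^sup>2 * (u + 2 * a * s)"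
      using \<open>0 < a\<close> \<open>0 \<le> u\<close> \<open>0 < s\<close> by simp
    then have "3 * a^2 * u * s^2 \<le> u^3 + 2 * a^3 * s^3"
      by (simp add: algebra_simps power2_eq_square power3_eq_cube)
    then show ?thesis
      using \<open>0 < s\<close> by (simp add: field_simps power2_eq_square power3_eq_cube)
  qed
  also have "\<dots> = l / s^2 + c * s"
    using \<open>c = 2 * a^3\<close> \<open>l = u^3\<close> by simp
  finally show ?thesis .
qed

lemma inverse_square_plus_linear_at_minimiser:
  fixes c l :: real
  assumes "0 < c" "0 \<le> l"
  defines "s \<equiv> l powr (1/3) / (c/2) powr (1/3)"
  shows "l / s^2 + c * s = 3 * (c/2) powr (2/3) * l powr (1/3)"
proof -
  define a u where "a = (c/2) powr (1/3)" and "u = l powr (1/3)"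
  have "0 < a" using assms by (simp add: a_def)
  have a2: "(c/2) powr (2/3) = a^2"
    using assms by (simp add: a_def powr_realpow[symmetric] powr_powr)
  have "c = 2 * a^3" "l = u^3" "s = u / a"
    using assms by (simp_all add: a_def u_def s_def powr_one_third_cube)
  then have "l / s^2 + c * s = u^3 / (u / a)^2 + 2 * a^3 * (u / a)"
    by simp
  also have "\<dots> = 3 * a^2 * u"
    using \<open>0 < a\<close> by (cases "u = 0") (simp_all add: field_simps power2_eq_square power3_eq_cube)
  finally show ?thesis
    by (simp add: a2 u_def)
qed

lemma inverse_square_rate_scale:
  fixes c s :: real
  assumes "0 \<le> c" "0 < s"
  shows "3 * (s powr (3/2) * c / 2) powr (2/3) = s * (3 * (c/2) powr (2/3))"
proof -
  have "(s powr (3/2) * c / 2) powr (2/3) = (s powr (3/2)) powr (2/3) * (c/2) powr (2/3)"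
    using assms by (subst powr_mult[symmetric]) auto
  also have "(s powr (3/2)) powr (2/3) = s"
    using assms by (simp add: powr_powr)
  finally show ?thesis by simp
qed

lemma neg_ln_le_of_exp_neg_le:
  fixes x p :: real
  assumes "exp (- x) \<le> p"
  shows "- ln p \<le> x"
proof -
  have "0 < p"
    using assms by (rule less_le_trans[OF exp_gt_zero])
  with assms have "- x \<le> ln p"
    by (simp add: ln_ge_iff)
  then show ?thesis
    by simp
qed

lemma asymp_equiv_of_scaled_bounds:
  fixes f g :: "'a \<Rightarrow> real"
  assumes g: "filterlim g at_top F" and "0 < k"
    and upper: "\<And>s. 1 < s \<Longrightarrow> eventually (\<lambda>x. f x \<le> s * k * g x) F"
    and lower: "\<And>s. 0 < s \<Longrightarrow> s < 1 \<Longrightarrow> \<exists>C. eventually (\<lambda>x. s * k * g x - C \<le> f x) F"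
  shows "f \<sim>[F] (\<lambda>x. k * g x)"
  unfolding asymp_equiv_altdef
proof (rule landau_o.smallI)
  fix e :: real
  assume "0 < e"
  define s where "s = max (1/2) (1 - e/2)"
  have "0 < s" "s < 1" "1 - e/2 \<le> s"
    using \<open>0 < e\<close> by (auto simp: s_def)
  then obtain C where C: "eventually (\<lambda>x. s * k * g x - C \<le> f x) F"
    using lower by blast
  moreover have "eventually (\<lambda>x. max 0 (2 * C / (e * k)) \<le> g x) F"
    using g filterlim_at_top by blast
  moreover have "eventually (\<lambda>x. f x \<le> (1 + e) * k * g x) F"
    using upper \<open>0 < e\<close> by simp
  ultimately show "eventually (\<lambda>x. norm (f x - k * g x) \<le> e * norm (k * g x)) F"
  proof eventually_elim
    case (elim x)
    have "C \<le> e/2 * (k * g x)"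
      using elim \<open>0 < e\<close> \<open>0 < k\<close> by (simp add: field_simps)
    moreover have "(1 - e/2) * (k * g x) \<le> s * (k * g x)"
      using elim \<open>1 - e/2 \<le> s\<close> \<open>0 < k\<close> by (intro mult_right_mono) auto
    moreover have "0 \<le> k * g x"
      using elim \<open>0 < k\<close> by simp
    ultimately show ?case
      using elim \<open>0 < e\<close> by (auto simp: abs_if algebra_simps)
  qed
qed

lemma eventually_exp_le_of_neg_ln_asymp:
  fixes F :: "real \<Rightarrow> real"
  assumes asymp: "(\<lambda>t. - ln (F t)) \<sim>[at_top] (\<lambda>t. c * t)"
    and "0 < c" "c < c'" and nonneg: "\<And>t. 0 \<le> F t"
  shows "eventually (\<lambda>t. exp (- c' * t) \<le> F t) at_top"
proof -
  have "eventually (\<lambda>t. norm (- ln (F t)) \<le> c'/c * norm (c * t)) at_top"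
    using assms by (intro asymp_equiv_imp_eventually_le) auto
  with asymp_equiv_eventually_pos_iff[OF asymp] eventually_gt_at_top[of 0]
  show ?thesis
  proof eventually_elim
    case (elim t)
    then have "ln (F t) < 0" "- c' * t \<le> ln (F t)"
      using \<open>0 < c\<close> by auto
    moreover have "0 < F t"
      \<comment> \<open>ln 0 = 0 in HOL, so positivity comes from ln (F t) < 0 and F t \<ge> 0\<close>
      using nonneg[of t] \<open>ln (F t) < 0\<close> by (cases "F t = 0") auto
    ultimately show ?case
      by (metis exp_le_cancel_iff exp_ln)
  qed
qed

lemma eventually_le_exp_of_neg_ln_asymp:
  fixes F :: "real \<Rightarrow> real"
  assumes asymp: "(\<lambda>t. - ln (F t)) \<sim>[at_top] (\<lambda>t. c * t)" and "0 < c" "c' < c"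
  shows "eventually (\<lambda>t. F t \<le> exp (- c' * t)) at_top"
proof -
  have "eventually (\<lambda>t. c'/c * norm (c * t) \<le> norm (- ln (F t))) at_top"
    using assms by (intro asymp_equiv_imp_eventually_ge) auto
  with asymp_equiv_eventually_pos_iff[OF asymp] eventually_gt_at_top[of 0]
  show ?thesis
  proof eventually_elim
    case (elim t)
    then have "ln (F t) \<le> - c' * t"
      using \<open>0 < c\<close> by auto
    show ?case
    proof (cases "0 < F t")
      case True
      then show ?thesis
        using \<open>ln (F t) \<le> - c' * t\<close> by (metis exp_le_cancel_iff exp_ln)
    next
      case False
      then show ?thesis
        using exp_gt_zero[of "- c' * t"] by linarith
    qed
  qed
qed

lemma (in prob_space) expectation_pos:
  fixes f :: "'a \<Rightarrow> real"
  assumes "integrable M f" and pos: "AE x in M. 0 < f x"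
  shows "0 < expectation f"
proof -
  have nonneg: "AE x in M. 0 \<le> f x"
    using pos by eventually_elim simp
  have "expectation f \<noteq> 0"
  proof
    assume "expectation f = 0"
    then have "AE x in M. f x = 0"
      using integral_nonneg_eq_0_iff_AE[OF \<open>integrable M f\<close> nonneg] by simp
    with pos have "AE x in M. False"
      by eventually_elim simp
    then show False
      by simp
  qed
  moreover have "0 \<le> expectation f"
    using nonneg by (rule integral_nonneg_AE)
  ultimately show ?thesis
    by simp
qed

lemma (in prob_space) prob_gt_le_expectation_div:
  fixes Y :: "'a \<Rightarrow> real" and \<phi> :: "real \<Rightarrow> real"
  assumes int: "integrable M (\<lambda>\<omega>. \<phi> (Y \<omega>))" and nonneg: "AE \<omega> in M. 0 \<le> \<phi> (Y \<omega>)"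
    and "0 < \<phi> t" and mono: "\<And>y. t < y \<Longrightarrow> \<phi> t \<le> \<phi> y"
  shows "prob {\<omega> \<in> space M. t < Y \<omega>} \<le> expectation (\<lambda>\<omega>. \<phi> (Y \<omega>)) / \<phi> t"
proof -
  have [measurable]: "(\<lambda>\<omega>. \<phi> (Y \<omega>)) \<in> borel_measurable M"
    using int by blast
  have "prob {\<omega> \<in> space M. t < Y \<omega>} \<le> prob {\<omega> \<in> space M. \<phi> t \<le> \<phi> (Y \<omega>)}"
    using mono by (intro finite_measure_mono) auto
  also have "\<dots> \<le> expectation (\<lambda>\<omega>. \<phi> (Y \<omega>)) / \<phi> t"
    using int nonneg \<open>0 < \<phi> t\<close> by (rule integral_Markov_inequality_measure[OF _ sets.top])
  finally show ?thesis .
qed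

lemma (in prob_space) neg_ln_prob_gt_ge:
  fixes Y :: "'a \<Rightarrow> real"
  assumes "integrable M (\<lambda>\<omega>. exp (a * Y \<omega>))" "0 \<le> a" "0 < prob {\<omega> \<in> space M. t < Y \<omega>}"
  shows "a * t - ln (expectation (\<lambda>\<omega>. exp (a * Y \<omega>))) \<le> - ln (prob {\<omega> \<in> space M. t < Y \<omega>})"
proof -
  let ?P = "prob {\<omega> \<in> space M. t < Y \<omega>}" and ?B = "expectation (\<lambda>\<omega>. exp (a * Y \<omega>))"
  have "?P \<le> ?B / exp (a * t)"
    using assms by (intro prob_gt_le_expectation_div) (auto intro: mult_left_mono)
  moreover from this have "0 < ?B"
    using assms(3) by (smt (verit) divide_nonpos_pos exp_gt_zero)
  ultimately have "ln ?P \<le> ln (?B / exp (a * t))"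
    using assms(3) by simp
  also have "\<dots> = ln ?B - a * t"
    using \<open>0 < ?B\<close> by (simp add: ln_div)
  finally show ?thesis
    by simp
qed

lemma ennreal_exp_le_tail_series:
  fixes a x :: real
  assumes "0 \<le> a"
  shows "ennreal (exp (a * x)) \<le> 1 + (\<Sum>n. ennreal (exp (a * (real n + 1))) * indicator {real n<..} x)"
proof (cases "x \<le> 0")
  case True
  then have "exp (a * x) \<le> 1"
    using assms by (simp add: mult_nonneg_nonpos)
  then have "ennreal (exp (a * x)) \<le> 1"
    by simp
  then show ?thesis
    by (meson add_increasing2 order.trans zero_le)
next
  case False
  define n where "n = nat \<lceil>x\<rceil> - 1"
  have "real n < x" "x \<le> real n + 1"
    using False unfolding n_def by auto linarith+
  then have "ennreal (exp (a * x)) \<le> ennreal (exp (a * (real n + 1))) * indicator {real n<..} x"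
    using assms by (simp add: ennreal_leI mult_left_mono)
  also have "\<dots> \<le> (\<Sum>n. ennreal (exp (a * (real n + 1))) * indicator {real n<..} x)"
    using sum_le_suminf[OF summableI, of "{n}"] by simp
  finally show ?thesis
    by (meson add_increasing order.trans zero_le)
qed

lemma (in prob_space) integrable_exp_of_summable_tail:
  fixes X :: "'a \<Rightarrow> real"
  assumes [measurable]: "X \<in> borel_measurable M" and "0 \<le> a"
    and summable: "summable (\<lambda>n. exp (a * (real n + 1)) * prob {\<omega> \<in> space M. real n < X \<omega>})"
  shows "integrable M (\<lambda>\<omega>. exp (a * X \<omega>))"
proof -
  define A where "A n = {\<omega> \<in> space M. real n < X \<omega>}" for n :: nat
  have [measurable]: "A n \<in> sets M" for n
    unfolding A_def by measurable
  have "(\<integral>\<^sup>+\<omega>. ennreal (exp (a * X \<omega>)) \<partial>M)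
      \<le> (\<integral>\<^sup>+\<omega>. 1 + (\<Sum>n. ennreal (exp (a * (real n + 1))) * indicator (A n) \<omega>) \<partial>M)"
  proof (rule nn_integral_mono)
    fix \<omega>
    assume "\<omega> \<in> space M"
    then show "ennreal (exp (a * X \<omega>)) \<le> 1 + (\<Sum>n. ennreal (exp (a * (real n + 1))) * indicator (A n) \<omega>)"
      using ennreal_exp_le_tail_series[OF \<open>0 \<le> a\<close>, of "X \<omega>"] by (simp add: A_def indicator_def)
  qed
  also have "\<dots> = 1 + (\<Sum>n. ennreal (exp (a * (real n + 1))) * emeasure M (A n))"
    by (subst nn_integral_add) (auto simp: nn_integral_suminf nn_integral_cmult_indicator emeasure_space_1)
  also have "\<dots> = 1 + (\<Sum>n. ennreal (exp (a * (real n + 1)) * prob (A n)))"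
    by (simp add: emeasure_eq_measure ennreal_mult)
  also have "\<dots> < \<infinity>"
    using summable unfolding A_def by (simp add: less_top[symmetric] ennreal_suminf_neq_top)
  finally show ?thesis
    by (intro integrableI_nonneg) auto
qed

lemma (in prob_space) integrable_exp_of_exp_tail:
  fixes X :: "'a \<Rightarrow> real"
  assumes [measurable]: "X \<in> borel_measurable M" and "0 \<le> a" "a < b"
    and tail: "eventually (\<lambda>t. prob {\<omega> \<in> space M. t < X \<omega>} \<le> exp (- b * t)) at_top"
  shows "integrable M (\<lambda>\<omega>. exp (a * X \<omega>))"
proof (rule integrable_exp_of_summable_tail)
  obtain T where "0 \<le> T" and T: "\<And>t. T \<le> t \<Longrightarrow> prob {\<omega> \<in> space M. t < X \<omega>} \<le> exp (- b * t)"
    using eventually_conj[OF tail eventually_ge_at_top[of 0]]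
    unfolding eventually_at_top_linorder by (metis order.trans nle_le)
  have geometric: "exp (a + b * T) * exp (a - b) ^ n = exp (a * (real n + 1)) * exp (b * (T - n))" for n :: nat
    by (simp add: exp_of_nat_mult[symmetric] exp_add[symmetric] algebra_simps)
  have bound: "exp (a * (real n + 1)) * prob {\<omega> \<in> space M. real n < X \<omega>} \<le> exp (a + b * T) * exp (a - b) ^ n"
    for n :: nat
  proof (cases "T \<le> real n")
    case True
    have "exp (- b * n) \<le> exp (b * (T - n))"
      using \<open>0 \<le> T\<close> \<open>0 \<le> a\<close> \<open>a < b\<close> by (simp add: algebra_simps)
    with T[OF True] have "prob {\<omega> \<in> space M. real n < X \<omega>} \<le> exp (b * (T - n))"
      by (rule order.trans)
    then show ?thesis
      unfolding geometric by (intro mult_left_mono) auto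
  next
    case False
    then have "1 \<le> exp (b * (T - n))"
      using \<open>0 \<le> a\<close> \<open>a < b\<close> by simp
    with prob_le_1 show ?thesis
      unfolding geometric by (intro mult_left_mono) (auto intro: order.trans)
  qed
  have "summable (\<lambda>n. exp (a + b * T) * exp (a - b) ^ n)"
    using \<open>a < b\<close> by (intro summable_mult summable_geometric) simp
  then show "summable (\<lambda>n. exp (a * (real n + 1)) * prob {\<omega> \<in> space M. real n < X \<omega>})"
    by (rule summable_comparison_test'[where N = 0]) (use bound in simp)
qed (use \<open>0 \<le> a\<close> in auto)

lemma (in prob_space) integrable_exp_of_neg_ln_tail_asymp:
  fixes X :: "'a \<Rightarrow> real"
  assumes "X \<in> borel_measurable M" and "0 \<le> a" "a < c"
    and tail: "(\<lambda>t. - ln (prob {\<omega> \<in> space M. t < X \<omega>})) \<sim>[at_top] (\<lambda>t. c * t)"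
  shows "integrable M (\<lambda>\<omega>. exp (a * X \<omega>))"
proof (rule integrable_exp_of_exp_tail)
  show "a < (a + c)/2"
    using \<open>a < c\<close> by simp
  show "eventually (\<lambda>t. prob {\<omega> \<in> space M. t < X \<omega>} \<le> exp (- ((a + c)/2) * t)) at_top"
    using tail \<open>0 \<le> a\<close> \<open>a < c\<close> by (intro eventually_le_exp_of_neg_ln_asymp) auto
qed (use assms in auto)

lemma (in prob_space) integrable_exp_neg_div_square:
  fixes S :: "'a \<Rightarrow> real"
  assumes "S \<in> borel_measurable M" "0 \<le> l"
  shows "integrable M (\<lambda>\<omega>. exp (- l / (S \<omega>)^2))"
  using assms by (intro integrable_const_bound[where B = 1]) (auto intro: divide_nonpos_nonneg)

lemma (in prob_space) neg_ln_expectation_exp_inverse_square_upper: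
  fixes S :: "'a \<Rightarrow> real"
  assumes [measurable]: "S \<in> borel_measurable M" and "0 < c"
    and tail: "eventually (\<lambda>t. exp (- c * t) \<le> prob {\<omega> \<in> space M. t < S \<omega>}) at_top"
  shows "eventually (\<lambda>l. - ln (expectation (\<lambda>\<omega>. exp (- l / (S \<omega>)^2)))
                          \<le> 3 * (c/2) powr (2/3) * l powr (1/3)) at_top"
proof -
  define \<tau> where "\<tau> l = l powr (1/3) / (c/2) powr (1/3)" for l :: real
  have "filterlim \<tau> at_top at_top"
    unfolding \<tau>_def using \<open>0 < c\<close> by real_asymp
  with tail have "eventually (\<lambda>l. exp (- c * \<tau> l) \<le> prob {\<omega> \<in> space M. \<tau> l < S \<omega>}) at_top"
    by (rule eventually_compose_filterlim)
  with eventually_gt_at_top[of 0] show ?thesis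
  proof eventually_elim
    case (elim l)
    let ?L = "expectation (\<lambda>\<omega>. exp (- l / (S \<omega>)^2))"
    have "0 < \<tau> l"
      using elim \<open>0 < c\<close> by (simp add: \<tau>_def)
    have "prob {\<omega> \<in> space M. \<tau> l < S \<omega>} \<le> ?L / exp (- l / (\<tau> l)^2)"
    proof (rule prob_gt_le_expectation_div[where \<phi> = "\<lambda>y. exp (- l / y^2)"])
      show "integrable M (\<lambda>\<omega>. exp (- l / (S \<omega>)^2))"
        using elim by (intro integrable_exp_neg_div_square) auto
      show "exp (- l / (\<tau> l)^2) \<le> exp (- l / y^2)" if "\<tau> l < y" for y
      proof -
        have "(\<tau> l)^2 \<le> y^2"
          using that \<open>0 < \<tau> l\<close> by (intro power_mono) auto
        then have "l / y^2 \<le> l / (\<tau> l)^2"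
          using that \<open>0 < \<tau> l\<close> elim by (intro divide_left_mono) auto
        then show ?thesis
          by simp
      qed
    qed auto
    with elim have "exp (- c * \<tau> l) \<le> ?L / exp (- l / (\<tau> l)^2)"
      by linarith
    then have "exp (- c * \<tau> l) * exp (- l / (\<tau> l)^2) \<le> ?L"
      by (simp only: pos_le_divide_eq[OF exp_gt_zero])
    moreover have "exp (- (l / (\<tau> l)^2 + c * \<tau> l)) = exp (- c * \<tau> l) * exp (- l / (\<tau> l)^2)"
      by (simp add: exp_add[symmetric] algebra_simps)
    ultimately have "exp (- (l / (\<tau> l)^2 + c * \<tau> l)) \<le> ?L"
      by simp
    then have "- ln ?L \<le> l / (\<tau> l)^2 + c * \<tau> l"
      by (rule neg_ln_le_of_exp_neg_le)
    also have "\<dots> = 3 * (c/2) powr (2/3) * l powr (1/3)"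
      unfolding \<tau>_def using elim \<open>0 < c\<close> by (intro inverse_square_plus_linear_at_minimiser) auto
    finally show ?case .
  qed
qed

lemma (in prob_space) neg_ln_expectation_exp_inverse_square_lower:
  fixes S :: "'a \<Rightarrow> real"
  assumes [measurable]: "S \<in> borel_measurable M" and pos: "AE \<omega> in M. 0 < S \<omega>" and "0 < c"
    and int: "integrable M (\<lambda>\<omega>. exp (c * S \<omega>))" and "0 \<le> l"
  shows "3 * (c/2) powr (2/3) * l powr (1/3) - ln (expectation (\<lambda>\<omega>. exp (c * S \<omega>)))
           \<le> - ln (expectation (\<lambda>\<omega>. exp (- l / (S \<omega>)^2)))"
proof -
  let ?r = "3 * (c/2) powr (2/3) * l powr (1/3)"
  let ?L = "expectation (\<lambda>\<omega>. exp (- l / (S \<omega>)^2))" and ?B = "expectation (\<lambda>\<omega>. exp (c * S \<omega>))"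
  have "?L \<le> expectation (\<lambda>\<omega>. exp (- ?r) * exp (c * S \<omega>))"
  proof (rule integral_mono_AE)
    show "integrable M (\<lambda>\<omega>. exp (- l / (S \<omega>)^2))"
      using \<open>0 \<le> l\<close> by (intro integrable_exp_neg_div_square) auto
    show "integrable M (\<lambda>\<omega>. exp (- ?r) * exp (c * S \<omega>))"
      using int by (rule integrable_mult_right)
    show "AE \<omega> in M. exp (- l / (S \<omega>)^2) \<le> exp (- ?r) * exp (c * S \<omega>)"
      using pos
    proof eventually_elim
      case (elim \<omega>)
      have "?r \<le> l / (S \<omega>)^2 + c * S \<omega>"
        using elim \<open>0 < c\<close> \<open>0 \<le> l\<close> by (intro inverse_square_plus_linear_ge)
      then show ?case
        by (simp add: exp_add[symmetric])
    qed
  qed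
  also have "\<dots> = exp (- ?r) * ?B"
    by simp
  finally have "?L \<le> exp (- ?r) * ?B" .
  moreover have "0 < ?L"
    using \<open>0 \<le> l\<close> by (intro expectation_pos integrable_exp_neg_div_square) auto
  ultimately have "ln ?L \<le> ln (exp (- ?r) * ?B)" and "0 < exp (- ?r) * ?B"
    by simp_all
  then show ?thesis
    by (simp add: ln_mult zero_less_mult_iff)
qed

lemma (in prob_space) neg_ln_expectation_exp_inverse_square_asymp:
  fixes S :: "'a \<Rightarrow> real"
  assumes [measurable]: "S \<in> borel_measurable M" and pos: "AE \<omega> in M. 0 < S \<omega>" and "0 < c"
    and tail: "(\<lambda>t. - ln (prob {\<omega> \<in> space M. t < S \<omega>})) \<sim>[at_top] (\<lambda>t. c * t)"
  shows "(\<lambda>l. - ln (expectation (\<lambda>\<omega>. exp (- l / (S \<omega>)^2))))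
           \<sim>[at_top] (\<lambda>l. 3 * (c/2) powr (2/3) * l powr (1/3))"
proof (rule asymp_equiv_of_scaled_bounds)
  show "filterlim (\<lambda>l::real. l powr (1/3)) at_top at_top"
    by real_asymp
  show "0 < 3 * (c/2) powr (2/3)"
    using \<open>0 < c\<close> by simp
next
  fix s :: real
  assume "1 < s"
  then have "c < s powr (3/2) * c"
    using \<open>0 < c\<close> by simp
  then have "eventually (\<lambda>t. exp (- (s powr (3/2) * c) * t) \<le> prob {\<omega> \<in> space M. t < S \<omega>}) at_top"
    using tail \<open>0 < c\<close> by (intro eventually_exp_le_of_neg_ln_asymp) auto
  from neg_ln_expectation_exp_inverse_square_upper[OF _ _ this]
  show "eventually (\<lambda>l. - ln (expectation (\<lambda>\<omega>. exp (- l / (S \<omega>)^2)))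
                          \<le> s * (3 * (c/2) powr (2/3)) * l powr (1/3)) at_top"
    using \<open>0 < c\<close> \<open>1 < s\<close> by (simp add: inverse_square_rate_scale)
next
  fix s :: real
  assume "0 < s" "s < 1"
  define c' where "c' = s powr (3/2) * c"
  have "0 < c'" "c' < c"
    using \<open>0 < s\<close> \<open>s < 1\<close> \<open>0 < c\<close> powr_less_mono2[of "3/2" s 1] by (simp_all add: c'_def)
  have "integrable M (\<lambda>\<omega>. exp (c' * S \<omega>))"
    using tail \<open>0 < c'\<close> \<open>c' < c\<close> by (intro integrable_exp_of_neg_ln_tail_asymp) auto
  then have "s * (3 * (c/2) powr (2/3)) * l powr (1/3) - ln (expectation (\<lambda>\<omega>. exp (c' * S \<omega>)))
               \<le> - ln (expectation (\<lambda>\<omega>. exp (- l / (S \<omega>)^2)))" if "0 \<le> l" for l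
    using neg_ln_expectation_exp_inverse_square_lower[OF _ pos \<open>0 < c'\<close> _ that] \<open>0 < s\<close> \<open>0 < c\<close>
    by (simp add: c'_def inverse_square_rate_scale)
  then have "eventually (\<lambda>l. s * (3 * (c/2) powr (2/3)) * l powr (1/3) - ln (expectation (\<lambda>\<omega>. exp (c' * S \<omega>)))
               \<le> - ln (expectation (\<lambda>\<omega>. exp (- l / (S \<omega>)^2)))) at_top"
    using eventually_ge_at_top[of 0] by (rule eventually_mono[rotated])
  then show "\<exists>C. eventually (\<lambda>l. s * (3 * (c/2) powr (2/3)) * l powr (1/3) - C
                \<le> - ln (expectation (\<lambda>\<omega>. exp (- l / (S \<omega>)^2)))) at_top"
    by blast
qed

lemma (in prob_space) integrable_exp_add_of_iid:
  fixes X1 X2 :: "'a \<Rightarrow> real"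
  assumes [measurable]: "X1 \<in> borel_measurable M" "X2 \<in> borel_measurable M"
    and indep: "indep_var borel X1 borel X2" and distr: "distr M borel X1 = distr M borel X2"
    and int: "integrable M (\<lambda>\<omega>. exp (a * X1 \<omega>))"
  shows "integrable M (\<lambda>\<omega>. exp (a * (X1 \<omega> + X2 \<omega>)))"
proof -
  have "integrable (distr M borel X2) (\<lambda>x. exp (a * x))"
    using int unfolding distr[symmetric] by (subst integrable_distr_eq) auto
  then have "integrable M (\<lambda>\<omega>. exp (a * X2 \<omega>))"
    by (subst (asm) integrable_distr_eq) auto
  then have "integrable M (\<lambda>\<omega>. exp (a * X1 \<omega>) * exp (a * X2 \<omega>))"
    using indep_var_compose[unfolded comp_def, OF indep, of "\<lambda>x. exp (a * x)" borel "\<lambda>x. exp (a * x)" borel]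
    by (intro indep_var_integrable int) auto
  then show ?thesis
    by (simp add: distrib_left exp_add)
qed

lemma (in prob_space) neg_ln_tail_add_iid_asymp:
  fixes X1 X2 :: "'a \<Rightarrow> real"
  assumes [measurable]: "X1 \<in> borel_measurable M" "X2 \<in> borel_measurable M"
    and indep: "indep_var borel X1 borel X2" and distr: "distr M borel X1 = distr M borel X2"
    and pos: "AE \<omega> in M. 0 < X2 \<omega>" and "0 < c"
    and tail: "(\<lambda>t. - ln (prob {\<omega> \<in> space M. t < X1 \<omega>})) \<sim>[at_top] (\<lambda>t. c * t)"
  shows "(\<lambda>t. - ln (prob {\<omega> \<in> space M. t < X1 \<omega> + X2 \<omega>})) \<sim>[at_top] (\<lambda>t. c * t)"
proof -
  let ?P = "\<lambda>t. prob {\<omega> \<in> space M. t < X1 \<omega> + X2 \<omega>}"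
  have sum_tail: "eventually (\<lambda>t. exp (- c' * t) \<le> ?P t) at_top" if "c < c'" for c'
  proof -
    have "eventually (\<lambda>t. exp (- c' * t) \<le> prob {\<omega> \<in> space M. t < X1 \<omega>}) at_top"
      using tail \<open>0 < c\<close> that by (rule eventually_exp_le_of_neg_ln_asymp) auto
    then show ?thesis
    proof (rule eventually_mono)
      fix t
      have "prob {\<omega> \<in> space M. t < X1 \<omega>} \<le> ?P t"
        using pos by (intro finite_measure_mono_AE) auto
      then show "exp (- c' * t) \<le> ?P t" if "exp (- c' * t) \<le> prob {\<omega> \<in> space M. t < X1 \<omega>}"
        using that by linarith
    qed
  qed
  show ?thesis
  proof (rule asymp_equiv_of_scaled_bounds[where g = "\<lambda>t. t", OF filterlim_ident \<open>0 < c\<close>])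
    fix s :: real
    assume "1 < s"
    with \<open>0 < c\<close> have "eventually (\<lambda>t. exp (- (s * c * t)) \<le> ?P t) at_top"
      using sum_tail[of "s * c"] by simp
    then show "eventually (\<lambda>t. - ln (?P t) \<le> s * c * t) at_top"
      by (rule eventually_mono) (rule neg_ln_le_of_exp_neg_le)
  next
    fix s :: real
    assume "0 < s" "s < 1"
    have "integrable M (\<lambda>\<omega>. exp (s * c * X1 \<omega>))"
      using tail \<open>0 < s\<close> \<open>s < 1\<close> \<open>0 < c\<close> by (intro integrable_exp_of_neg_ln_tail_asymp) auto
    then have int: "integrable M (\<lambda>\<omega>. exp (s * c * (X1 \<omega> + X2 \<omega>)))"
      by (rule integrable_exp_add_of_iid[OF assms(1,2) indep distr])
    from \<open>0 < c\<close> have "eventually (\<lambda>t. exp (- (2 * c) * t) \<le> ?P t) at_top"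
      by (intro sum_tail) simp
    then have "eventually (\<lambda>t. s * c * t - ln (expectation (\<lambda>\<omega>. exp (s * c * (X1 \<omega> + X2 \<omega>))))
                 \<le> - ln (?P t)) at_top"
    proof (rule eventually_mono)
      fix t
      assume "exp (- (2 * c) * t) \<le> ?P t"
      then have "0 < ?P t"
        by (rule less_le_trans[OF exp_gt_zero])
      then show "s * c * t - ln (expectation (\<lambda>\<omega>. exp (s * c * (X1 \<omega> + X2 \<omega>)))) \<le> - ln (?P t)"
        using \<open>0 < s\<close> \<open>0 < c\<close> by (intro neg_ln_prob_gt_ge[OF int]) auto
    qed
    then show "\<exists>C. eventually (\<lambda>t. s * c * t - C \<le> - ln (?P t)) at_top"
      by blast
  qed
qed

theorem lemma4p2:
  fixes M :: "'a measure" and X1 X2 :: "'a \<Rightarrow> real" and c :: real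
  assumes "prob_space M"
    and "X1 \<in> borel_measurable M" and "X2 \<in> borel_measurable M"
    and "prob_space.indep_var M borel X1 borel X2"
    and "distr M borel X1 = distr M borel X2"
    and "AE \<omega> in M. X1 \<omega> > 0"
    and "c > 0"
    and "(\<lambda>t. - ln (measure M {\<omega> \<in> space M. X1 \<omega> > t})) \<sim>[at_top] (\<lambda>t. c * t)"
  shows "(\<lambda>l. - ln (integral\<^sup>L M (\<lambda>\<omega>. exp (- l / (X1 \<omega> + X2 \<omega>)\<^sup>2))))
           \<sim>[at_top] (\<lambda>l. 3 * (c / 2) powr (2/3) * l powr (1/3))"
proof -
  interpret prob_space M by fact
  have "AE x in distr M borel X2. 0 < x"
    unfolding assms(5)[symmetric] using assms(2,6) by (subst AE_distr_iff) auto
  then have X2_pos: "AE \<omega> in M. 0 < X2 \<omega>"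
    using assms(3) by (subst (asm) AE_distr_iff) auto
  have "(\<lambda>t. - ln (prob {\<omega> \<in> space M. t < X1 \<omega> + X2 \<omega>})) \<sim>[at_top] (\<lambda>t. c * t)"
    using assms X2_pos by (intro neg_ln_tail_add_iid_asymp) auto
  moreover have "AE \<omega> in M. 0 < X1 \<omega> + X2 \<omega>"
    using assms(6) X2_pos by eventually_elim simp
  ultimately show ?thesis
    using assms(2,3,7) by (intro neg_ln_expectation_exp_inverse_square_asymp) auto
qed

end
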